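(* Let $\mathbf{f}$ be the Fibonacci sequence, fixed point of the substitution $0\mapsto01$, $1\mapsto0$. For an integer $k\ge1$, $\mathbf{f}$ is totally $(k,1)$-unbalanced if and only if $k\ge4$.
   Context: For positive integers $k,C$, a sequence $\mathbf{x}$ is totally $(k,C)$-unbalanced if for every length-$k$ factor $w$ of $\mathbf{x}$ there exist two factors $u,v$ of $\mathbf{x}$ with $|u|=|v|$ and $||u|_w-|v|_w|>C$, where $|u|_w$ is the number of (possibly overlapping) occurrences of $w$ in $u$. *)

theory Defs
  imports Main
begin

fun fib_subst :: "nat \<Rightarrow> nat list" where
  "fib_subst 0 = [0, 1]"
| "fib_subst (Suc _) = [0]"

text \<open>Iterates of the substitution applied to the letter 0; each is a prefix of the next.\<close>
fun fib_iter :: "nat \<Rightarrow> nat list" where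
  "fib_iter 0 = [0]"
| "fib_iter (Suc n) = concat (map fib_subst (fib_iter n))"

text \<open>The Fibonacci word: the limit (fixed point) of the iterates.
  Since length (fib_iter n) > n, position i is read off the i-th iterate.\<close>
definition fib_word :: "nat \<Rightarrow> nat" where
  "fib_word i = fib_iter i ! i"

definition is_factor :: "(nat \<Rightarrow> 'a) \<Rightarrow> 'a list \<Rightarrow> bool" where
  "is_factor x w \<longleftrightarrow> (\<exists>i. w = map x [i..<i + length w])"

definition occ :: "'a list \<Rightarrow> 'a list \<Rightarrow> nat" where
  "occ u w = card {j. j + length w \<le> length u \<and> take (length w) (drop j u) = w}"

definition totally_unbalanced :: "(nat \<Rightarrow> 'a) \<Rightarrow> nat \<Rightarrow> nat \<Rightarrow> bool" where
  "totally_unbalanced x k C \<longleftrightarrow>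
     (\<forall>w. is_factor x w \<and> length w = k \<longrightarrow>
        (\<exists>u v. is_factor x u \<and> is_factor x v \<and> length u = length v \<and>
               \<bar>int (occ u w) - int (occ v w)\<bar> > int C))"

end

theory Submission
  imports Defs
begin

(*
  The Fibonacci word f is balanced: two factors of equal length contain numbers of 1s that
  differ by at most one. This is proved by descent: a shortest violating pair of windows is,
  up to its border letters, the image of a shorter violating pair under the substitution.

  For k <= 3 some factor of length k ([1], [0, 1] or [0, 1, 0]) occurs exactly at the positions
  of the 1s of f, shifted by a constant, so its occurrence counts inherit the balance.

  For k >= 4 every factor w is gapped: it occurs at two positions d apart, while d + 1
  consecutive positions carry no occurrence, so two windows of length d + |w| contain at
  least two and no occurrences of w. Gappedness is proved by induction on |w|: padding w by
  zeros brings it to the form subst_word z @ [0] with z a shorter factor, and a gap of z lifts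
  to a gap of the image because, by balance, the image of a gap is longer than the image of
  the distance between two occurrences. The factors z of length 2 and 3 are checked on a
  prefix of f.
*)

definition subst_word :: "nat list \<Rightarrow> nat list" where
  "subst_word z = concat (map fib_subst z)"

lemma subst_word_simps [simp]:
  "subst_word [] = []"
  "subst_word (x # z) = fib_subst x @ subst_word z"
  "subst_word (z @ z') = subst_word z @ subst_word z'"
  by (simp_all add: subst_word_def)

lemma fib_subst_eq: "fib_subst x = (if x = 0 then [0, 1] else [0])"
  by (cases x) simp_all

lemma fib_subst_not_Nil [simp]: "fib_subst x \<noteq> []"
  by (cases x) simp_all

lemma length_subst_word: "length (subst_word z) = length z + count_list z 0"
  by (induction z) (simp_all add: fib_subst_eq)

lemma count_list_subst_word_0: "count_list (subst_word z) 0 = length z"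
  by (induction z) (simp_all add: fib_subst_eq)

lemma count_list_subst_word_1: "count_list (subst_word z) 1 = count_list z 0"
  by (induction z) (simp_all add: fib_subst_eq)

lemma fib_iter_Suc_subst [simp]: "fib_iter (Suc n) = subst_word (fib_iter n)"
  by (simp add: subst_word_def)

declare fib_iter.simps(2) [simp del]

lemma subst_word_binary: "set (subst_word z) \<subseteq> {0, 1}"
  by (induction z) (simp_all add: fib_subst_eq)

lemma fib_iter_binary: "set (fib_iter n) \<subseteq> {0, 1}"
  using subst_word_binary by (cases n) auto

lemma fib_iter_extends: "m \<le> n \<Longrightarrow> \<exists>r. fib_iter n = fib_iter m @ r"
proof (induction n rule: dec_induct)
  case (step n)
  have "\<exists>r. fib_iter (Suc k) = fib_iter k @ r" for k
    by (induction k) auto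
  with step.IH show ?case
    by (metis append.assoc)
qed simp

lemma length_fib_iter: "n < length (fib_iter n)"
proof (induction n)
  case (Suc n)
  have "0 \<in> set (fib_iter n)"
    using fib_iter_extends[of 0 n] by auto
  then have "0 < count_list (fib_iter n) 0"
    by (metis count_list_0_iff gr0I)
  with Suc show ?case
    by (simp add: length_subst_word)
qed simp

lemma fib_word_fib_iter: "i < length (fib_iter n) \<Longrightarrow> fib_word i = fib_iter n ! i"
  using fib_iter_extends[of i n] fib_iter_extends[of n i] length_fib_iter[of i]
  by (cases "i \<le> n") (auto simp: fib_word_def nth_append)

lemma map_fib_word_fib_iter:
  "k \<le> length (fib_iter n) \<Longrightarrow> map fib_word [0..<k] = take k (fib_iter n)"
  by (simp add: list_eq_iff_nth_eq fib_word_fib_iter)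

lemma fib_word_cases: "fib_word i = 0 \<or> fib_word i = 1"
  using fib_iter_binary[of i] nth_mem[OF length_fib_iter[of i]]
  by (auto simp: fib_word_def)

lemma fib_word_le_1: "fib_word i \<le> 1"
  using fib_word_cases[of i] by auto

definition block_start :: "nat \<Rightarrow> nat" where
  "block_start t = length (subst_word (map fib_word [0..<t]))"

lemma fib_word_prefix_subst:
  "map fib_word [0..<block_start t] = subst_word (map fib_word [0..<t])"
proof -
  let ?G = "fib_iter t"
  have t: "t < length ?G"
    by (rule length_fib_iter)
  have G: "map fib_word [0..<t] = take t ?G"
    using t by (simp add: map_fib_word_fib_iter)
  have "fib_iter (Suc t) = subst_word (take t ?G) @ subst_word (drop t ?G)"
    by (metis append_take_drop_id fib_iter_Suc_subst subst_word_simps(3))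
  then show ?thesis
    using map_fib_word_fib_iter[of "block_start t" "Suc t"]
    by (simp add: G block_start_def)
qed

lemma block_start_0 [simp]: "block_start 0 = 0"
  by (simp add: block_start_def)

lemma map_fib_word_split:
  "a \<le> b \<Longrightarrow> map fib_word [0..<b] = map fib_word [0..<a] @ map fib_word [a..<b]"
  using upt_add_eq_append[of 0 a "b - a"] by simp

lemma block_start_add:
  "a \<le> b \<Longrightarrow> block_start b = block_start a + length (subst_word (map fib_word [a..<b]))"
  by (simp add: block_start_def map_fib_word_split)

lemma map_fib_word_block_range:
  assumes "a \<le> b"
  shows "map fib_word [block_start a..<block_start b] = subst_word (map fib_word [a..<b])"
proof -
  have "block_start a \<le> block_start b"
    using block_start_add[OF assms] by simp
  then have "map fib_word [0..<block_start a] @ map fib_word [block_start a..<block_start b] =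
      map fib_word [0..<block_start b]"
    by (simp add: map_fib_word_split)
  also have "\<dots> = subst_word (map fib_word [0..<b])"
    by (rule fib_word_prefix_subst)
  also have "\<dots> = map fib_word [0..<block_start a] @ subst_word (map fib_word [a..<b])"
    using assms by (simp add: map_fib_word_split fib_word_prefix_subst)
  finally show ?thesis
    by simp
qed

lemma fib_word_block: "map fib_word [block_start t..<block_start (Suc t)] = fib_subst (fib_word t)"
  using map_fib_word_block_range[of t "Suc t"] by simp

lemma block_start_Suc: "block_start (Suc t) = block_start t + 2 - fib_word t"
  using block_start_add[of t "Suc t"] fib_word_cases[of t] by auto

lemma block_start_less: "block_start t < block_start (Suc t)"
  using block_start_Suc[of t] fib_word_le_1[of t] by simp

lemma block_start_strict_mono: "strict_mono block_start"
  by (simp add: block_start_less strict_mono_Suc_iff)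

lemma block_start_le_iff [simp]: "block_start a \<le> block_start b \<longleftrightarrow> a \<le> b"
  by (rule strict_mono_less_eq[OF block_start_strict_mono])

lemma block_start_less_iff [simp]: "block_start a < block_start b \<longleftrightarrow> a < b"
  by (rule strict_mono_less[OF block_start_strict_mono])

lemma fib_word_block_start: "fib_word (block_start t) = 0"
proof -
  have "fib_word (block_start t) = map fib_word [block_start t..<block_start (Suc t)] ! 0"
    using block_start_less[of t] by simp
  then show ?thesis
    by (simp add: fib_word_block fib_subst_eq)
qed

lemma fib_word_after_block_start:
  assumes "fib_word t = 0"
  shows "fib_word (Suc (block_start t)) = 1"
proof -
  have "block_start (Suc t) = block_start t + 2"
    using assms block_start_Suc[of t] by simp
  then have "fib_word (Suc (block_start t)) = map fib_word [block_start t..<block_start (Suc t)] ! 1"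
    by simp
  then show ?thesis
    by (simp add: fib_word_block assms)
qed

lemma ex_block_containing: "\<exists>t. block_start t \<le> x \<and> x < block_start (Suc t)"
proof (induction x)
  case 0
  show ?case
    using block_start_less[of 0] by (intro exI[of _ 0]) simp
next
  case (Suc x)
  then obtain t where t: "block_start t \<le> x" "x < block_start (Suc t)"
    by blast
  show ?case
  proof (cases "Suc x = block_start (Suc t)")
    case True
    then show ?thesis
      using block_start_less[of "Suc t"] by (metis order_refl)
  next
    case False
    then show ?thesis
      using t by (intro exI[of _ t]) simp
  qed
qed

lemma fib_word_position_cases:
  obtains t where "x = block_start t"
  | t where "x = Suc (block_start t)" "fib_word t = 0"
proof -
  obtain t where "block_start t \<le> x" "x < block_start (Suc t)"
    using ex_block_containing by blast
  then have "x = block_start t \<or> x = Suc (block_start t) \<and> fib_word t = 0"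
    using block_start_Suc[of t] fib_word_cases[of t] by auto
  then show thesis
    using that by blast
qed

lemma fib_word_0 [simp]: "fib_word 0 = 0"
  using fib_word_block_start[of 0] by simp

lemma fib_word_zero_iff: "fib_word x = 0 \<longleftrightarrow> (\<exists>t. x = block_start t)"
proof
  show "fib_word x = 0 \<Longrightarrow> \<exists>t. x = block_start t"
    by (cases x rule: fib_word_position_cases) (auto simp: fib_word_after_block_start)
qed (auto simp: fib_word_block_start)

lemma fib_word_one:
  assumes "fib_word x = 1"
  obtains t where "x = Suc (block_start t)" "block_start (Suc t) = Suc x" "fib_word t = 0"
proof (cases x rule: fib_word_position_cases)
  case (1 t)
  then show thesis
    using assms by (simp add: fib_word_block_start)
next
  case (2 t)
  then show thesis
    using that block_start_Suc[of t] by simp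
qed

lemma fib_word_one_next: "fib_word x = 1 \<Longrightarrow> fib_word (Suc x) = 0"
  by (metis fib_word_block_start fib_word_one)

lemma fib_word_one_prev: "fib_word (Suc x) = 1 \<Longrightarrow> fib_word x = 0"
  by (metis fib_word_block_start fib_word_one old.nat.inject)

lemma fib_word_no_11: "\<not> (fib_word x = 1 \<and> fib_word (Suc x) = 1)"
  using fib_word_one_next by force

lemma fib_word_no_000:
  "\<not> (fib_word x = 0 \<and> fib_word (Suc x) = 0 \<and> fib_word (Suc (Suc x)) = 0)"
proof
  assume zeros: "fib_word x = 0 \<and> fib_word (Suc x) = 0 \<and> fib_word (Suc (Suc x)) = 0"
  then obtain t where t: "x = block_start t"
    by (auto simp: fib_word_zero_iff)
  then have "fib_word t = 1"
    using zeros fib_word_after_block_start[of t] fib_word_cases[of t] by auto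
  then have "block_start (Suc t) = Suc x"
    using t block_start_Suc[of t] by simp
  then have "fib_word (Suc t) = 1"
    using zeros fib_word_after_block_start[of "Suc t"] fib_word_cases[of "Suc t"] by auto
  with \<open>fib_word t = 1\<close> show False
    using fib_word_no_11 by blast
qed

definition ones :: "nat \<Rightarrow> nat \<Rightarrow> nat" where
  "ones x y = count_list (map fib_word [x..<y]) 1"

lemma ones_add: "x \<le> y \<Longrightarrow> y \<le> z \<Longrightarrow> ones x z = ones x y + ones y z"
  unfolding ones_def by (metis count_list_append le_add_diff_inverse map_append upt_add_eq_append)

lemma ones_le: "ones x y \<le> y - x"
  unfolding ones_def by (metis count_le_length length_map length_upt)

lemma ones_single [simp]: "ones x (Suc x) = fib_word x"
  using fib_word_cases[of x] by (auto simp: ones_def)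

lemma ones_Suc: "x \<le> y \<Longrightarrow> ones x (Suc y) = ones x y + fib_word y"
  using ones_add[of x y "Suc y"] by simp

lemma ones_Suc_left: "x < y \<Longrightarrow> ones x y = fib_word x + ones (Suc x) y"
  using ones_add[of x "Suc x" y] by simp

lemma count_list_fib_word_0: "count_list (map fib_word [a..<b]) 0 + ones a b = b - a"
proof -
  have "fib_word i \<in> {0, 1}" for i
    using fib_word_cases[of i] by simp
  then have "set (map fib_word [a..<b]) \<subseteq> {0, 1}"
    by (simp only: set_map image_subsetI)
  from sum_count_set[OF this] show ?thesis
    unfolding ones_def by simp
qed

lemma block_start_diff:
  "a \<le> b \<Longrightarrow> block_start b + ones a b = block_start a + 2 * (b - a)"
  using block_start_add[of a b] count_list_fib_word_0[of a b] by (simp add: length_subst_word)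

lemma ones_block_range:
  "a \<le> b \<Longrightarrow> ones (block_start a) (block_start b) + ones a b = b - a"
proof -
  assume "a \<le> b"
  then have "ones (block_start a) (block_start b) = count_list (map fib_word [a..<b]) 0"
    unfolding ones_def by (simp only: map_fib_word_block_range count_list_subst_word_1)
  then show ?thesis
    using count_list_fib_word_0[of a b] by simp
qed

text \<open>The heavy window is bordered by 1s and the light one by 0s, so they are, up to one
  border letter, the images of windows [a, b) and [c, d); since a block contains a 1 exactly
  when its letter is 0, the preimages form a shorter violating pair with the roles exchanged.\<close>

lemma ones_excess_shorter:
  assumes excess: "ones j (j + n) + 2 \<le> ones i (i + n)"
    and ends: "fib_word i = 1" "fib_word (i + n - 1) = 1" "fib_word j = 0" "fib_word (j + n - 1) = 0"
    and n: "2 \<le> n"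
  shows "\<exists>m < n. \<exists>a c. ones a (a + m) + 2 \<le> ones c (c + m)"
proof -
  obtain a where a: "i = Suc (block_start a)"
    using fib_word_one[OF ends(1)] by metis
  obtain b' where "block_start (Suc b') = Suc (i + n - 1)"
    using fib_word_one[OF ends(2)] by metis
  then obtain b where b: "block_start b = i + n"
    using n by fastforce
  obtain c where c: "j = block_start c"
    using ends(3) fib_word_zero_iff by blast
  obtain d where d: "j + n - 1 = block_start d"
    using ends(4) fib_word_zero_iff by blast
  have "block_start a \<le> block_start b" "block_start c \<le> block_start d"
    using a b c d n by linarith+
  then have ab: "a \<le> b" and cd: "c \<le> d"
    by simp_all
  define m where "m = d - c"
  have "ones i (i + n) = ones (block_start a) (block_start b)"
    using ones_Suc_left[of "block_start a" "block_start b"] a b by (simp add: fib_word_block_start)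
  moreover have "ones j (j + n) = ones (block_start c) (block_start d)"
    using ones_Suc[of j "j + n - 1"] ends(4) c d n cd by simp
  moreover note ones_block_range[OF ab] block_start_diff[OF ab]
    ones_block_range[OF cd] block_start_diff[OF cd] ones_le[of c d]
  ultimately have "b - a \<le> m" "m < n" "ones a b + (m - (b - a)) + 2 \<le> ones c d"
    using excess a b c d n cd unfolding m_def by linarith+
  moreover have "ones a (a + m) \<le> ones a b + (m - (b - a))"
    using ones_add[of a b "a + m"] ones_le[of b "a + m"] calculation(1) ab by linarith
  moreover have "ones c (c + m) = ones c d"
    using cd m_def by simp
  ultimately have "ones a (a + m) + 2 \<le> ones c (c + m)"
    by linarith
  with \<open>m < n\<close> show ?thesis
    by blast
qed

lemma ones_balanced: "ones i (i + n) \<le> ones j (j + n) + 1"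
proof (induction n arbitrary: i j rule: less_induct)
  case (less n)
  show ?case
  proof (rule ccontr)
    assume "\<not> ?thesis"
    then have excess: "ones j (j + n) + 2 \<le> ones i (i + n)"
      by simp
    then have "2 \<le> n"
      using ones_le[of i "i + n"] by simp
    then obtain n' where n: "n = Suc n'"
      using not0_implies_Suc by force
    have "ones (Suc i) (Suc i + n') \<le> ones (Suc j) (Suc j + n') + 1"
      using less.IH[of n' "Suc i" "Suc j"] n by simp
    moreover have "ones i (i + n') \<le> ones j (j + n') + 1"
      using less.IH[of n' i j] n by simp
    moreover note ones_Suc_left[of i "i + n"] ones_Suc_left[of j "j + n"]
      ones_Suc[of i "i + n'"] ones_Suc[of j "j + n'"]
    ultimately have "fib_word i = 1" "fib_word j = 0" "fib_word (i + n') = 1" "fib_word (j + n') = 0"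
      using excess n fib_word_cases[of i] fib_word_cases[of j]
        fib_word_cases[of "i + n'"] fib_word_cases[of "j + n'"] by auto
    then obtain m a c where "m < n" "ones a (a + m) + 2 \<le> ones c (c + m)"
      using ones_excess_shorter[OF excess _ _ _ _ \<open>2 \<le> n\<close>] n by auto
    then show False
      using less.IH[of m c a] by simp
  qed
qed

definition occurs_at :: "nat list \<Rightarrow> nat \<Rightarrow> bool" where
  "occurs_at w s \<longleftrightarrow> map fib_word [s..<s + length w] = w"

lemma occurs_at_Nil [simp]: "occurs_at [] s"
  by (simp add: occurs_at_def)

lemma occurs_at_Cons: "occurs_at (x # w) s \<longleftrightarrow> fib_word s = x \<and> occurs_at w (Suc s)"
  by (simp add: occurs_at_def upt_conv_Cons del: upt_Suc)

lemma occurs_at_append: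
  "occurs_at (u @ v) s \<longleftrightarrow> occurs_at u s \<and> occurs_at v (s + length u)"
  by (induction u arbitrary: s) (simp_all add: occurs_at_Cons)

lemma is_factor_fib_word_iff: "is_factor fib_word w \<longleftrightarrow> (\<exists>s. occurs_at w s)"
  unfolding is_factor_def occurs_at_def by metis

lemma occurs_at_binary: "occurs_at w s \<Longrightarrow> set w \<subseteq> {0, 1}"
proof (induction w arbitrary: s)
  case (Cons x w)
  then show ?case
    using fib_word_cases[of s] by (auto simp: occurs_at_Cons)
qed simp

lemma occurs_at_subst_word:
  assumes "occurs_at z t"
  shows "occurs_at (subst_word z @ [0]) (block_start t)"
proof -
  have "map fib_word [block_start t..<block_start (t + length z)] = subst_word z"
    using assms map_fib_word_block_range[of t "t + length z"] by (simp add: occurs_at_def)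
  moreover have "block_start (t + length z) = block_start t + length (subst_word z)"
    using assms block_start_add[of t "t + length z"] by (simp add: occurs_at_def)
  ultimately show ?thesis
    using fib_word_block_start[of "t + length z"] by (simp add: occurs_at_def)
qed

lemma occurs_at_desubst:
  assumes w: "occurs_at w s" "w \<noteq> []" "hd w = 0" "last w = 0"
  obtains t z where "s = block_start t" "occurs_at z t" "w = subst_word z @ [0]"
proof -
  obtain n where n: "length w = Suc n"
    using w(2) by (cases w) auto
  then have w_eq: "w = map fib_word [s..<s + n] @ [fib_word (s + n)]"
    using w(1) by (simp add: occurs_at_def)
  moreover have "hd w = fib_word s"
    using w(1,2) by (cases w) (auto simp: occurs_at_Cons)
  ultimately obtain a b where a: "s = block_start a" and b: "s + n = block_start b"
    using w(3,4) by (auto simp: fib_word_zero_iff)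
  then have ab: "a \<le> b"
    using block_start_le_iff[of a b] by linarith
  have "w = subst_word (map fib_word [a..<b]) @ [0]"
    using w_eq a b by (simp add: map_fib_word_block_range[OF ab] fib_word_block_start)
  moreover have "occurs_at (map fib_word [a..<b]) a"
    using ab by (simp add: occurs_at_def)
  ultimately show thesis
    using that a by blast
qed

lemma subst_word_not_Cons_1: "subst_word z \<noteq> 1 # r"
  by (cases z) (simp_all add: fib_subst_eq)

lemma subst_word_inj:
  "set x \<subseteq> {0, 1} \<Longrightarrow> set y \<subseteq> {0, 1} \<Longrightarrow> subst_word x = subst_word y \<Longrightarrow> x = y"
proof (induction x arbitrary: y)
  case Nil
  then show ?case
    by (cases y) simp_all
next
  case (Cons a x)
  then obtain b y' where y: "y = b # y'"
    by (cases y) simp_all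
  have "a = b"
    using Cons.prems y subst_word_not_Cons_1 subst_word_not_Cons_1[THEN not_sym]
    by (auto simp: fib_subst_eq split: if_splits)
  then show ?case
    using Cons y by (simp add: fib_subst_eq)
qed

lemma hd_subst_word_snoc_0 [simp]: "hd (subst_word z @ [0]) = 0"
  by (cases z) (simp_all add: fib_subst_eq)

lemma occurs_at_subst_word_iff:
  assumes "set z \<subseteq> {0, 1}"
  shows "occurs_at (subst_word z @ [0]) s \<longleftrightarrow> (\<exists>t. s = block_start t \<and> occurs_at z t)"
proof
  assume "occurs_at (subst_word z @ [0]) s"
  then obtain t z' where t: "s = block_start t" "occurs_at z' t"
    "subst_word z @ [0] = subst_word z' @ [0]"
    by (rule occurs_at_desubst) simp_all
  then have "z' = z"
    using subst_word_inj[OF occurs_at_binary[OF t(2)] assms] by simp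
  with t show "\<exists>t. s = block_start t \<and> occurs_at z t"
    by blast
qed (use occurs_at_subst_word in blast)

lemma occurs_at_Cons_0_iff:
  assumes "hd w = 1" "w \<noteq> []"
  shows "occurs_at (0 # w) t \<longleftrightarrow> occurs_at w (Suc t)"
  using assms fib_word_one_prev[of t] by (cases w) (auto simp: occurs_at_Cons)

lemma occurs_at_snoc_0_iff:
  assumes "last w = 1" "w \<noteq> []"
  shows "occurs_at (w @ [0]) t \<longleftrightarrow> occurs_at w t"
proof -
  obtain u where w: "w = u @ [1]"
    using assms by (metis append_butlast_last_id)
  show ?thesis
    using fib_word_one_next[of "t + length u"] by (auto simp: w occurs_at_append occurs_at_Cons)
qed

lemma occurs_at_hd_1_pos: "occurs_at w s \<Longrightarrow> hd w = 1 \<Longrightarrow> w \<noteq> [] \<Longrightarrow> 0 < s"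
  by (cases w) (auto simp: occurs_at_Cons intro: gr0I)

definition occurrence_free :: "nat list \<Rightarrow> nat \<Rightarrow> nat \<Rightarrow> bool" where
  "occurrence_free w q r \<longleftrightarrow> (\<forall>t. q < t \<and> t < r \<longrightarrow> \<not> occurs_at w t)"

text \<open>For a gapped word, windows of length d + length w at p and at q + 1 contain at least two
  and no occurrences of w respectively.\<close>

definition gapped :: "nat list \<Rightarrow> bool" where
  "gapped w \<longleftrightarrow> (\<exists>p d q. 0 < d \<and> occurs_at w p \<and> occurs_at w (p + d) \<and>
      occurrence_free w q (q + d + 2))"

text \<open>The image of the gap (q, r) under the substitution is longer by at least two than the
  image of the distance d; this is what makes subst_word z @ [0] gapped.\<close>

definition image_gapped :: "nat list \<Rightarrow> bool" where
  "image_gapped z \<longleftrightarrow> (\<exists>p d q r. 0 < d \<and> occurs_at z p \<and> occurs_at z (p + d) \<and>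
      occurrence_free z q r \<and>
      block_start (p + d) - block_start p + 2 \<le> block_start r - block_start q)"

lemma gapped_imp_image_gapped:
  assumes "gapped z"
  shows "image_gapped z"
proof -
  obtain p d q where pdq: "0 < d" "occurs_at z p" "occurs_at z (p + d)"
    "occurrence_free z q (q + d + 2)"
    using assms by (auto simp: gapped_def)
  have "ones (q + d) (q + d + 2) \<le> 1"
    using fib_word_no_11[of "q + d"] fib_word_cases[of "q + d"] fib_word_cases[of "Suc (q + d)"]
      ones_Suc[of "q + d" "Suc (q + d)"] by auto
  moreover note ones_add[of q "q + d" "q + d + 2"] ones_balanced[of q d p] ones_le[of p "p + d"]
    block_start_diff[of p "p + d"] block_start_diff[of q "q + d + 2"]
  ultimately have "block_start (p + d) - block_start p + 2 \<le> block_start (q + d + 2) - block_start q"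
    by linarith
  with pdq show ?thesis
    unfolding image_gapped_def by blast
qed

lemma image_gapped_imp_gapped_subst:
  assumes "image_gapped z"
  shows "gapped (subst_word z @ [0])"
proof -
  obtain p d q r where pdqr: "0 < d" "occurs_at z p" "occurs_at z (p + d)" "occurrence_free z q r"
    and long: "block_start (p + d) - block_start p + 2 \<le> block_start r - block_start q"
    using assms by (auto simp: image_gapped_def)
  define d' where "d' = block_start (p + d) - block_start p"
  have "block_start p < block_start (p + d)"
    using pdqr(1) by simp
  then have d': "0 < d'" "block_start (p + d) = block_start p + d'"
    by (simp_all add: d'_def)
  have "occurrence_free (subst_word z @ [0]) (block_start q) (block_start q + d' + 2)"
    unfolding occurrence_free_def occurs_at_subst_word_iff[OF occurs_at_binary[OF pdqr(2)]]
  proof (intro allI impI notI)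
    fix t
    assume "block_start q < t \<and> t < block_start q + d' + 2"
      and "\<exists>s. t = block_start s \<and> occurs_at z s"
    then obtain s where "block_start q < t" "t < block_start q + d' + 2" "t = block_start s"
        "occurs_at z s"
      by blast
    moreover have "block_start q + d' + 2 \<le> block_start r"
      using long d'_def by linarith
    ultimately have "block_start q < block_start s" "block_start s < block_start r"
      by linarith+
    then show False
      using \<open>occurs_at z s\<close> pdqr(4) by (simp add: occurrence_free_def)
  qed
  then show ?thesis
    unfolding gapped_def using d' occurs_at_subst_word[OF pdqr(2)] occurs_at_subst_word[OF pdqr(3)]
    by metis
qed

lemma gapped_Cons_0:
  assumes "hd w = 1" "w \<noteq> []" "gapped (0 # w)"
  shows "gapped w"
proof -
  obtain p d q where pdq: "0 < d" "occurs_at (0 # w) p" "occurs_at (0 # w) (p + d)"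
    "occurrence_free (0 # w) q (q + d + 2)"
    using assms(3) by (auto simp: gapped_def)
  have "occurrence_free w (Suc q) (Suc q + d + 2)"
    unfolding occurrence_free_def
  proof (intro allI impI notI)
    fix t
    assume "Suc q < t \<and> t < Suc q + d + 2" "occurs_at w t"
    then obtain t' where "t = Suc t'" "q < t'" "t' < q + d + 2"
      by (cases t) auto
    moreover have "occurs_at (0 # w) t'"
      using occurs_at_Cons_0_iff[OF assms(1,2)] \<open>occurs_at w t\<close> calculation(1) by blast
    ultimately show False
      using pdq(4) by (auto simp: occurrence_free_def)
  qed
  moreover have "occurs_at w (Suc p)" "occurs_at w (Suc p + d)"
    using pdq(2,3) occurs_at_Cons_0_iff[OF assms(1,2)] by simp_all
  ultimately show ?thesis
    unfolding gapped_def using pdq(1) by blast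
qed

lemma gapped_snoc_0:
  assumes "last w = 1" "w \<noteq> []"
  shows "gapped (w @ [0]) \<longleftrightarrow> gapped w"
proof -
  have occurs: "occurs_at (w @ [0]) t \<longleftrightarrow> occurs_at w t" for t
    by (rule occurs_at_snoc_0_iff[OF assms])
  show ?thesis
    unfolding gapped_def occurrence_free_def occurs ..
qed

lemma zero_bordered_extension:
  assumes "occurs_at w s" "2 \<le> length w"
  obtains w' s' where "occurs_at w' s'" "hd w' = 0" "last w' = 0" "length w \<le> length w'"
    "count_list w' 0 \<le> length w" "gapped w' \<Longrightarrow> gapped w"
proof -
  obtain a m b where w: "w = a # m @ [b]"
    using assms(2) by (metis Suc_le_length_iff append_butlast_last_id list.discI numeral_2_eq_2)
  have ab: "a \<in> {0, 1}" "b \<in> {0, 1}"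
    using occurs_at_binary[OF assms(1)] w by auto
  define w1 where "w1 = (if a = 1 then 0 # w else w)"
  obtain s1 where w1: "occurs_at w1 s1" "gapped w1 \<Longrightarrow> gapped w"
  proof (cases "a = 1")
    case True
    then have "0 < s"
      using occurs_at_hd_1_pos[OF assms(1)] w by simp
    then have "occurs_at (0 # w) (s - 1)"
      using assms(1) occurs_at_Cons_0_iff[of w "s - 1"] True w by simp
    then show thesis
      using that gapped_Cons_0[of w] True w by (simp add: w1_def)
  next
    case False
    then show thesis
      using that assms(1) by (simp add: w1_def)
  qed
  define w' where "w' = (if b = 1 then w1 @ [0] else w1)"
  have "occurs_at w' s1 \<and> (gapped w' \<longrightarrow> gapped w1)"
  proof (cases "b = 1")
    case True
    then have "last w1 = 1" "w1 \<noteq> []"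
      by (simp_all add: w1_def w)
    then show ?thesis
      using w1(1) occurs_at_snoc_0_iff gapped_snoc_0 True by (simp add: w'_def)
  qed (simp add: w'_def w1(1))
  moreover have "hd w' = 0" "last w' = 0" "length w \<le> length w'" "count_list w' 0 \<le> length w"
    using ab count_le_length[of m 0] by (auto simp: w'_def w1_def w)
  ultimately show thesis
    using that w1(2) by blast
qed

lemma fib_word_prefix_21:
  "map fib_word [0..<21] = [0, 1, 0, 0, 1, 0, 1, 0, 0, 1, 0, 0, 1, 0, 1, 0, 0, 1, 0, 1, 0]"
proof -
  have "fib_iter 6 = [0, 1, 0, 0, 1, 0, 1, 0, 0, 1, 0, 0, 1, 0, 1, 0, 0, 1, 0, 1, 0]"
    by (simp add: numeral_eq_Suc fib_subst_eq)
  then show ?thesis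
    using map_fib_word_fib_iter[of 21 6] by simp
qed

lemma image_gapped_by_prefix:
  assumes xs: "map fib_word [0..<n] = xs"
    and bounds: "p + d + length z \<le> n" "r + length z \<le> n" "q < r" "0 < d"
    and occurrences: "take (length z) (drop p xs) = z" "take (length z) (drop (p + d) xs) = z"
    and free: "\<forall>t \<in> set [Suc q..<r]. take (length z) (drop t xs) \<noteq> z"
    and long: "length (subst_word (take (p + d) xs)) - length (subst_word (take p xs)) + 2
      \<le> length (subst_word (take r xs)) - length (subst_word (take q xs))"
  shows "image_gapped z"
proof -
  have occurs: "occurs_at z s \<longleftrightarrow> take (length z) (drop s xs) = z" if "s + length z \<le> n" for s
    using that by (simp add: occurs_at_def xs[symmetric] take_map drop_map)
  have block: "block_start t = length (subst_word (take t xs))" if "t \<le> n" for t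
    using that by (simp add: block_start_def xs[symmetric] take_map)
  have "occurrence_free z q r"
    using free bounds by (auto simp: occurrence_free_def occurs)
  moreover have "block_start (p + d) - block_start p + 2 \<le> block_start r - block_start q"
    using long bounds by (simp add: block)
  moreover have "occurs_at z p" "occurs_at z (p + d)"
    using bounds occurrences by (simp_all add: occurs)
  ultimately show ?thesis
    unfolding image_gapped_def using bounds by blast
qed

lemma image_gapped_short_factors:
  "image_gapped [0, 0]" "image_gapped [0, 1]" "image_gapped [1, 0]"
  "image_gapped [0, 0, 1]" "image_gapped [0, 1, 0]" "image_gapped [1, 0, 0]" "image_gapped [1, 0, 1]"
proof -
  note by_prefix = image_gapped_by_prefix[OF fib_word_prefix_21]
  show "image_gapped [0, 0]"
    by (rule by_prefix[where p = 7 and d = 3 and q = 2 and r = 6])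
      (simp_all add: upt_rec fib_subst_eq)
  show "image_gapped [0, 1]"
    by (rule by_prefix[where p = 3 and d = 2 and q = 0 and r = 3])
      (simp_all add: upt_rec fib_subst_eq)
  show "image_gapped [1, 0]"
    by (rule by_prefix[where p = 4 and d = 2 and q = 1 and r = 4])
      (simp_all add: upt_rec fib_subst_eq)
  show "image_gapped [0, 0, 1]"
    by (rule by_prefix[where p = 7 and d = 3 and q = 2 and r = 6])
      (simp_all add: upt_rec fib_subst_eq)
  show "image_gapped [0, 1, 0]"
    by (rule by_prefix[where p = 3 and d = 2 and q = 0 and r = 3])
      (simp_all add: upt_rec fib_subst_eq)
  show "image_gapped [1, 0, 0]"
    by (rule by_prefix[where p = 6 and d = 3 and q = 1 and r = 6])
      (simp_all add: upt_rec fib_subst_eq)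
  show "image_gapped [1, 0, 1]"
    by (rule by_prefix[where p = 12 and d = 5 and q = 4 and r = 11])
      (simp_all add: upt_rec fib_subst_eq)
qed

lemma short_factors:
  assumes "occurs_at z t" "2 \<le> length z" "length z \<le> 3"
  shows "z \<in> {[0, 0], [0, 1], [1, 0], [0, 0, 1], [0, 1, 0], [1, 0, 0], [1, 0, 1]}"
proof -
  obtain a b r where z: "z = a # b # r" "length r \<le> 1"
    using assms(2,3) by (cases z rule: remdups_adj.cases) auto
  have ab: "fib_word t = a" "fib_word (Suc t) = b" "occurs_at r (Suc (Suc t))"
    using assms(1) z by (simp_all add: occurs_at_Cons)
  then have "a \<in> {0, 1}" "b \<in> {0, 1}" "\<not> (a = 1 \<and> b = 1)"
    using fib_word_cases[of t] fib_word_cases[of "Suc t"] fib_word_no_11[of t] by auto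
  moreover have "r = [] \<or> (\<exists>c \<in> {0, 1}. r = [c] \<and> \<not> (b = 1 \<and> c = 1) \<and> \<not> (a = 0 \<and> b = 0 \<and> c = 0))"
    using z(2) ab fib_word_cases[of "Suc (Suc t)"] fib_word_no_11[of "Suc t"] fib_word_no_000[of t]
    by (cases r) (auto simp: occurs_at_Cons)
  ultimately show ?thesis
    unfolding z by auto
qed

lemma image_gapped_short:
  "occurs_at z t \<Longrightarrow> 2 \<le> length z \<Longrightarrow> length z \<le> 3 \<Longrightarrow> image_gapped z"
  using short_factors image_gapped_short_factors by blast

lemma gapped_long_factor: "occurs_at w s \<Longrightarrow> 4 \<le> length w \<Longrightarrow> gapped w"
proof (induction "length w" arbitrary: w s rule: less_induct)
  case less
  obtain w' s' where w': "occurs_at w' s'" "hd w' = 0" "last w' = 0" "length w \<le> length w'"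
    "count_list w' 0 \<le> length w" "gapped w' \<Longrightarrow> gapped w"
    using zero_bordered_extension[OF less.prems(1)] less.prems(2) by auto
  then have "w' \<noteq> []"
    using less.prems(2) by auto
  then obtain t z where z: "occurs_at z t" "w' = subst_word z @ [0]"
    using occurs_at_desubst w' by metis
  have "length z < length w"
    using w'(5) z(2) by (simp add: count_list_subst_word_0)
  moreover have "2 \<le> length z"
    using w'(4) z(2) less.prems(2) count_le_length[of z 0] by (simp add: length_subst_word)
  ultimately have "image_gapped z"
    using less.hyps[OF _ z(1)] image_gapped_short[OF z(1)] gapped_imp_image_gapped
    by (cases "4 \<le> length z") auto
  then show ?case
    using image_gapped_imp_gapped_subst z(2) w'(6) by blast
qed

lemma occ_window:
  "occ (map fib_word [p..<p + n]) w = card {j. j + length w \<le> n \<and> occurs_at w (p + j)}"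
proof -
  have "take (length w) (drop j (map fib_word [p..<p + n])) = map fib_word [p + j..<p + j + length w]"
    if "j + length w \<le> n" for j
    using that by (simp add: drop_map take_map)
  then show ?thesis
    unfolding occ_def occurs_at_def by (intro arg_cong[where f = card]) auto
qed

lemma is_factor_window: "is_factor fib_word (map fib_word [p..<p + n])"
  unfolding is_factor_def by (intro exI[of _ p]) simp

lemma gapped_unbalanced:
  assumes "gapped w"
  shows "\<exists>u v. is_factor fib_word u \<and> is_factor fib_word v \<and> length u = length v \<and>
    int 1 < \<bar>int (occ u w) - int (occ v w)\<bar>"
proof -
  obtain p d q where pdq: "0 < d" "occurs_at w p" "occurs_at w (p + d)"
    "occurrence_free w q (q + d + 2)"
    using assms by (auto simp: gapped_def)
  define n where "n = d + length w"
  have "{0, d} \<subseteq> {j. j + length w \<le> n \<and> occurs_at w (p + j)}"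
    using pdq by (auto simp: n_def)
  moreover have "finite {j. j + length w \<le> n \<and> occurs_at w (p + j)}"
    by (rule finite_subset[of _ "{..n}"]) auto
  ultimately have "card {0, d} \<le> occ (map fib_word [p..<p + n]) w"
    unfolding occ_window by (rule card_mono[rotated])
  then have "2 \<le> occ (map fib_word [p..<p + n]) w"
    using pdq(1) by simp
  moreover have "{j. j + length w \<le> n \<and> occurs_at w (Suc q + j)} = {}"
    using pdq(4) by (auto simp: n_def occurrence_free_def)
  then have "occ (map fib_word [Suc q..<Suc q + n]) w = 0"
    unfolding occ_window by (simp only: card.empty)
  ultimately have "int 1 < \<bar>int (occ (map fib_word [p..<p + n]) w) -
      int (occ (map fib_word [Suc q..<Suc q + n]) w)\<bar>"
    by simp
  then show ?thesis
    using is_factor_window[of p n] is_factor_window[of "Suc q" n] by fastforce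
qed

lemma ones_card: "ones x (x + m) = card {j. j < m \<and> fib_word (x + j) = 1}"
  unfolding ones_def count_list_eq_length_filter length_filter_conv_card
  by (rule arg_cong[where f = card]) auto

lemma occ_marked_window:
  assumes "w \<noteq> []" "\<And>s. occurs_at w s \<longleftrightarrow> fib_word (s + off) = 1"
  shows "occ (map fib_word [i..<i + n]) w = ones (i + off) (i + off + (Suc n - length w))"
proof -
  have "{j. j + length w \<le> n \<and> occurs_at w (i + j)} =
      {j. j < Suc n - length w \<and> fib_word (i + off + j) = 1}"
    using assms by (auto simp: ac_simps)
  then show ?thesis
    by (simp add: occ_window ones_card)
qed

lemma marked_word_balanced:
  assumes "w \<noteq> []" "\<And>s. occurs_at w s \<longleftrightarrow> fib_word (s + off) = 1"
    and "is_factor fib_word u" "is_factor fib_word v" "length u = length v"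
  shows "\<bar>int (occ u w) - int (occ v w)\<bar> \<le> 1"
proof -
  define n where "n = length u"
  obtain i where u: "u = map fib_word [i..<i + n]"
    using assms(3) unfolding is_factor_def n_def by blast
  obtain j where v: "v = map fib_word [j..<j + n]"
    using assms(4) unfolding is_factor_def n_def assms(5) by blast
  define m where "m = Suc n - length w"
  have "occ u w = ones (i + off) (i + off + m)" "occ v w = ones (j + off) (j + off + m)"
    unfolding u v m_def by (rule occ_marked_window[OF assms(1,2)])+
  moreover note ones_balanced[of "i + off" m "j + off"] ones_balanced[of "j + off" m "i + off"]
  ultimately show ?thesis
    by (simp add: abs_le_iff)
qed

lemma totally_unbalanced_long:
  assumes "4 \<le> k"
  shows "totally_unbalanced fib_word k 1"
  unfolding totally_unbalanced_def
proof (intro allI impI)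
  fix w
  assume "is_factor fib_word w \<and> length w = k"
  then obtain s where "occurs_at w s" "4 \<le> length w"
    using assms by (auto simp: is_factor_fib_word_iff)
  then show "\<exists>u v. is_factor fib_word u \<and> is_factor fib_word v \<and> length u = length v \<and>
      int 1 < \<bar>int (occ u w) - int (occ v w)\<bar>"
    by (intro gapped_unbalanced gapped_long_factor)
qed

lemma occurs_at_marker_iff:
  "occurs_at [1] s \<longleftrightarrow> fib_word (s + 0) = 1"
  "occurs_at [0, 1] s \<longleftrightarrow> fib_word (s + 1) = 1"
  "occurs_at [0, 1, 0] s \<longleftrightarrow> fib_word (s + 1) = 1"
  using fib_word_one_prev[of s] fib_word_one_next[of "Suc s"] by (auto simp: occurs_at_Cons)

lemma not_totally_unbalanced_short:
  assumes "1 \<le> k" "k \<le> 3"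
  shows "\<not> totally_unbalanced fib_word k 1"
proof
  assume unbalanced: "totally_unbalanced fib_word k 1"
  have "fib_word 1 = 1" "fib_word 2 = 0"
    using fib_word_after_block_start[of 0] fib_word_one_next[of 1] by (simp_all add: numeral_2_eq_2)
  then have "occurs_at [1] 1" "occurs_at [0, 1] 0" "occurs_at [0, 1, 0] 0"
    by (simp_all add: occurs_at_Cons numeral_2_eq_2)
  then have factors:
    "is_factor fib_word [1]" "is_factor fib_word [0, 1]" "is_factor fib_word [0, 1, 0]"
    unfolding is_factor_fib_word_iff by blast+
  consider "k = 1" | "k = 2" | "k = 3"
    using assms by linarith
  then obtain w off where w: "length w = k" "is_factor fib_word w" "w \<noteq> []"
    "\<And>s. occurs_at w s \<longleftrightarrow> fib_word (s + off) = 1"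
  proof cases
    case 1
    show thesis
      by (rule that[OF _ factors(1) _ occurs_at_marker_iff(1)]) (simp_all add: 1)
  next
    case 2
    show thesis
      by (rule that[OF _ factors(2) _ occurs_at_marker_iff(2)]) (simp_all add: 2)
  next
    case 3
    show thesis
      by (rule that[OF _ factors(3) _ occurs_at_marker_iff(3)]) (simp_all add: 3)
  qed
  then obtain u v where "is_factor fib_word u" "is_factor fib_word v" "length u = length v"
    "int 1 < \<bar>int (occ u w) - int (occ v w)\<bar>"
    using unbalanced unfolding totally_unbalanced_def by blast
  with marked_word_balanced[OF w(3,4)] show False
    by fastforce
qed

theorem theorem16:
  fixes k :: nat
  assumes "k \<ge> 1"
  shows "totally_unbalanced fib_word k 1 \<longleftrightarrow> k \<ge> 4"
  using assms totally_unbalanced_long not_totally_unbalanced_short by force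

end
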